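(* Let $E/F$ be a quadratic extension of fields of characteristic $0$ and let $\gamma\in\mathrm{GL}_n(E)$ be normal with $\bar\gamma\gamma$ regular semisimple. Then $T_\gamma=\{g\in\mathrm{GL}_n(E):g^{-1}\gamma\bar g=\gamma\}$ is contained in $\mathrm{GL}_n(F)$ and in fact equals the centralizer of $\bar\gamma\gamma$ in $\mathrm{GL}_n(F)$.
   Context: $x\mapsto\bar x$ denotes the nontrivial automorphism of $E/F$ applied entrywise. $\gamma$ is normal if $\bar\gamma\gamma\in\mathrm{GL}_n(F)$. *)

theory Defs
  imports "Jordan_Normal_Form.Gauss_Jordan_Elimination" "Jordan_Normal_Form.Char_Poly"
begin

text \<open>The field extension E/F is modelled by a field E of characteristic 0 together with
  a nontrivial involutive field automorphism c of E (the generator of Gal(E/F));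
  F is the fixed field of c.\<close>

definition quad_conj :: "('a::field_char_0 \<Rightarrow> 'a) \<Rightarrow> bool" where
  "quad_conj c \<longleftrightarrow> (\<forall>x y. c (x + y) = c x + c y) \<and> (\<forall>x y. c (x * y) = c x * c y)
     \<and> c 1 = 1 \<and> (\<forall>x. c (c x) = x) \<and> (\<exists>x. c x \<noteq> x)"

definition GL :: "nat \<Rightarrow> 'a::field mat set" where
  "GL n = {g \<in> carrier_mat n n. invertible_mat g}"

definition GL_fix :: "('a::field \<Rightarrow> 'a) \<Rightarrow> nat \<Rightarrow> 'a mat set" where
  "GL_fix c n = {g \<in> GL n. \<forall>i<n. \<forall>j<n. c (g $$ (i, j)) = g $$ (i, j)}"

definition mat_inv :: "'a::field mat \<Rightarrow> 'a mat" where
  "mat_inv g = the (mat_inverse g)"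

text \<open>Regular semisimple in GL_n: the characteristic polynomial has distinct roots
  (over an algebraic closure), i.e. it is separable.\<close>
definition regular_semisimple :: "nat \<Rightarrow> 'a::field mat \<Rightarrow> bool" where
  "regular_semisimple n A \<longleftrightarrow> A \<in> GL n \<and> coprime (char_poly A) (pderiv (char_poly A))"

definition T_set :: "('a::field \<Rightarrow> 'a) \<Rightarrow> nat \<Rightarrow> 'a mat \<Rightarrow> 'a mat set" where
  "T_set c n \<gamma> = {g \<in> GL n. mat_inv g * \<gamma> * map_mat c g = \<gamma>}"

end

theory Submission
  imports Defs "HOL-Algebra.Algebraic_Closure_Type"
begin

(* Let N = \<gamma>' \<gamma>, where ' is the conjugation.  As N has entries in F, \<gamma> \<gamma>' = N' = N, so \<gamma>
   commutes with N; and g \<in> T means \<gamma> g' = g \<gamma>, which forces g to commute with N as well.  Since N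
   is regular semisimple, over an algebraic closure it is similar to a diagonal matrix with distinct
   eigenvalues, so everything commuting with N is simultaneously diagonalized and the centralizer
   of N is commutative.  Hence g commutes with \<gamma>, so \<gamma> g' = \<gamma> g and g' = g.  Conversely a
   conjugation-fixed g commuting with N commutes with \<gamma>, hence lies in T. *)

lemma diagonal_mat_mult_index_left:
  fixes D M :: "'a::semiring_0 mat"
  assumes D: "D \<in> carrier_mat n n" and M: "M \<in> carrier_mat n m" and "diagonal_mat D"
    and i: "i < n" and j: "j < m"
  shows "(D * M) $$ (i, j) = D $$ (i, i) * M $$ (i, j)"
proof -
  have "(D * M) $$ (i, j) = (\<Sum>k \<in> {0..<n}. D $$ (i, k) * M $$ (k, j))"
    using D M i j by (simp add: scalar_prod_def)
  also have "\<dots> = (\<Sum>k \<in> {0..<n}. if k = i then D $$ (i, i) * M $$ (i, j) else 0)"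
    using assms by (intro sum.cong) (auto simp: diagonal_mat_def)
  finally show ?thesis
    using i by simp
qed

lemma diagonal_mat_mult_index_right:
  fixes D M :: "'a::semiring_0 mat"
  assumes D: "D \<in> carrier_mat n n" and M: "M \<in> carrier_mat m n" and "diagonal_mat D"
    and i: "i < m" and j: "j < n"
  shows "(M * D) $$ (i, j) = M $$ (i, j) * D $$ (j, j)"
proof -
  have "(M * D) $$ (i, j) = (\<Sum>k \<in> {0..<n}. M $$ (i, k) * D $$ (k, j))"
    using D M i j by (simp add: scalar_prod_def)
  also have "\<dots> = (\<Sum>k \<in> {0..<n}. if k = j then M $$ (i, j) * D $$ (j, j) else 0)"
    using assms by (intro sum.cong) (auto simp: diagonal_mat_def)
  finally show ?thesis
    using j by simp
qed

lemma diagonal_mat_commute: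
  fixes D E :: "'a::comm_semiring_0 mat"
  assumes D: "D \<in> carrier_mat n n" and E: "E \<in> carrier_mat n n"
    and "diagonal_mat D" and "diagonal_mat E"
  shows "D * E = E * D"
proof (rule eq_matI)
  fix i j assume "i < dim_row (E * D)" and "j < dim_col (E * D)"
  then have i: "i < n" and j: "j < n"
    using E D by auto
  have "(D * E) $$ (i, j) = D $$ (i, i) * E $$ (i, j)"
    using diagonal_mat_mult_index_left[OF D E \<open>diagonal_mat D\<close> i j] .
  also have "\<dots> = E $$ (i, i) * D $$ (i, j)"
    using assms i j by (cases "i = j") (auto simp: diagonal_mat_def mult.commute)
  also have "\<dots> = (E * D) $$ (i, j)"
    using diagonal_mat_mult_index_left[OF E D \<open>diagonal_mat E\<close> i j] ..
  finally show "(D * E) $$ (i, j) = (E * D) $$ (i, j)" .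
qed (use D E in auto)

lemma commute_diagonal_distinct_imp_diagonal:
  fixes D M :: "'a::idom mat"
  assumes D: "D \<in> carrier_mat n n" and M: "M \<in> carrier_mat n n" and "diagonal_mat D"
    and distinct: "inj_on (\<lambda>i. D $$ (i, i)) {..<n}" and comm: "D * M = M * D"
  shows "diagonal_mat M"
  unfolding diagonal_mat_def
proof (intro allI impI)
  fix i j assume "i < dim_row M" "j < dim_col M" "i \<noteq> j"
  then have i: "i < n" and j: "j < n" and "i \<noteq> j"
    using M by auto
  have "D $$ (i, i) * M $$ (i, j) = (D * M) $$ (i, j)"
    using diagonal_mat_mult_index_left[OF D M \<open>diagonal_mat D\<close> i j] ..
  also have "\<dots> = (M * D) $$ (i, j)"
    by (simp only: comm)
  also have "\<dots> = M $$ (i, j) * D $$ (j, j)"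
    using diagonal_mat_mult_index_right[OF D M \<open>diagonal_mat D\<close> i j] .
  finally have "(D $$ (i, i) - D $$ (j, j)) * M $$ (i, j) = 0"
    by (simp add: algebra_simps)
  moreover have "D $$ (i, i) \<noteq> D $$ (j, j)"
    using distinct i j \<open>i \<noteq> j\<close> unfolding inj_on_def by blast
  ultimately show "M $$ (i, j) = 0"
    by simp
qed

lemma similar_diagonal_distinct_imp_centralizer_commute:
  fixes A B C D :: "'a::idom mat"
  assumes A: "A \<in> carrier_mat n n" and sim: "similar_mat_wit A D P Q"
    and "diagonal_mat D" and distinct: "inj_on (\<lambda>i. D $$ (i, i)) {..<n}"
    and B: "B \<in> carrier_mat n n" and C: "C \<in> carrier_mat n n"
    and AB: "A * B = B * A" and AC: "A * C = C * A"
  shows "B * C = C * B"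
proof -
  from similar_mat_witD2[OF A sim] have PQ: "P * Q = 1\<^sub>m n" and D: "D \<in> carrier_mat n n"
    and P: "P \<in> carrier_mat n n" and Q: "Q \<in> carrier_mat n n"
    by auto
  note [simp] = assoc_mult_mat[of _ n n _ n _ n]
  have conj_mult: "Q * (M * M') * P = (Q * M * P) * (Q * M' * P)"
    if "M \<in> carrier_mat n n" "M' \<in> carrier_mat n n" for M M'
  proof -
    have "(Q * M * P) * (Q * M' * P) = Q * M * (P * Q) * M' * P"
      using that P Q by simp
    then show ?thesis
      using that P Q by (simp add: PQ)
  qed
  have conj_back: "P * (Q * M * P) * Q = M" if "M \<in> carrier_mat n n" for M
  proof -
    have "P * (Q * M * P) * Q = (P * Q) * M * (P * Q)"
      using that P Q by simp
    then show ?thesis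
      using that by (simp add: PQ)
  qed
  have D_eq: "D = Q * A * P"
    using similar_mat_witD2(3)[OF D similar_mat_wit_sym[OF sim]] .
  have conj_diagonal: "diagonal_mat (Q * M * P)"
    if M: "M \<in> carrier_mat n n" and AM: "A * M = M * A" for M
  proof (rule commute_diagonal_distinct_imp_diagonal[OF D _ \<open>diagonal_mat D\<close> distinct])
    show "D * (Q * M * P) = Q * M * P * D"
      unfolding D_eq using conj_mult[OF A M] conj_mult[OF M A] AM by simp
  qed (use M P Q in simp)
  have "Q * (B * C) * P = Q * (C * B) * P"
    unfolding conj_mult[OF B C] conj_mult[OF C B]
    using conj_diagonal[OF B AB] conj_diagonal[OF C AC] B C P Q
    by (intro diagonal_mat_commute[of _ n]) auto
  then show ?thesis
    using conj_back B C by (metis mult_carrier_mat)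
qed

lemma diagonal_mat_mult_vec_index:
  fixes D :: "'a::semiring_0 mat"
  assumes D: "D \<in> carrier_mat n n" and "diagonal_mat D" and w: "w \<in> carrier_vec n" and i: "i < n"
  shows "(D *\<^sub>v w) $ i = D $$ (i, i) * w $ i"
proof -
  have "(D *\<^sub>v w) $ i = (\<Sum>k \<in> {0..<n}. D $$ (i, k) * w $ k)"
    using D w i by (simp add: scalar_prod_def)
  also have "\<dots> = (\<Sum>k \<in> {0..<n}. if k = i then D $$ (i, i) * w $ i else 0)"
    using assms by (intro sum.cong) (auto simp: diagonal_mat_def)
  finally show ?thesis
    using i by simp
qed

lemma mult_vec_single_support_eq_zero:
  fixes P :: "'a::field mat" and w :: "'a vec"
  assumes P: "P \<in> carrier_mat n n" and w: "w \<in> carrier_vec n" and m: "m < n"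
    and support: "\<And>k. k < n \<Longrightarrow> k \<noteq> m \<Longrightarrow> w $ k = 0"
    and col: "col P m \<noteq> 0\<^sub>v n" and Pw: "P *\<^sub>v w = 0\<^sub>v n"
  shows "w = 0\<^sub>v n"
proof -
  have "w = w $ m \<cdot>\<^sub>v unit_vec n m"
    using support w m by (intro eq_vecI) auto
  then have "P *\<^sub>v w = w $ m \<cdot>\<^sub>v (P *\<^sub>v unit_vec n m)"
    using mult_mat_vec[OF P unit_vec_carrier] by metis
  also have "P *\<^sub>v unit_vec n m = col P m"
    using P m by (intro eq_vecI) auto
  finally have P_w: "w $ m \<cdot>\<^sub>v col P m = 0\<^sub>v n"
    using Pw by simp
  have "\<exists>k<n. col P m $ k \<noteq> 0"
  proof (rule ccontr)
    assume "\<not> (\<exists>k<n. col P m $ k \<noteq> 0)"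
    then have "col P m = 0\<^sub>v n"
      using P by (intro eq_vecI) auto
    with col show False ..
  qed
  then obtain k where "k < n" and "col P m $ k \<noteq> 0"
    by blast
  moreover have "w $ m * col P m $ k = 0"
    using arg_cong[OF P_w, of "\<lambda>u :: 'a vec. u $ k"] \<open>k < n\<close> P by simp
  ultimately have "w $ m = 0"
    by simp
  show ?thesis
  proof (rule eq_vecI)
    fix k assume "k < dim_vec (0\<^sub>v n :: 'a vec)"
    with support \<open>w $ m = 0\<close> show "w $ k = 0\<^sub>v n $ k"
      by (cases "k = m") auto
  qed (use w in simp)
qed

lemma intertwining_preserves_kernel:
  fixes A P D :: "'a::field mat"
  assumes A: "A \<in> carrier_mat n n" and P: "P \<in> carrier_mat n n" and D: "D \<in> carrier_mat n n"
    and AP: "A * P = P * D" and w: "w \<in> carrier_vec n" and Pw: "P *\<^sub>v w = 0\<^sub>v n"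
  shows "P *\<^sub>v (D *\<^sub>v w - a \<cdot>\<^sub>v w) = 0\<^sub>v n"
proof -
  have "P *\<^sub>v (D *\<^sub>v w) = A *\<^sub>v (P *\<^sub>v w)"
    using arg_cong[OF AP, of "\<lambda>M. M *\<^sub>v w"] A P D w by simp
  then show ?thesis
    using A P D w Pw
    by (simp add: mult_minus_distrib_mat_vec mult_mat_vec) (intro eq_vecI, auto)
qed

lemma eigenvector_columns_independent:
  fixes A P D :: "'a::field mat"
  assumes A: "A \<in> carrier_mat n n" and P: "P \<in> carrier_mat n n" and D: "D \<in> carrier_mat n n"
    and "diagonal_mat D" and distinct: "inj_on (\<lambda>i. D $$ (i, i)) {..<n}"
    and AP: "A * P = P * D" and cols: "\<And>i. i < n \<Longrightarrow> col P i \<noteq> 0\<^sub>v n"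
    and w: "w \<in> carrier_vec n" and Pw: "P *\<^sub>v w = 0\<^sub>v n"
  shows "w = 0\<^sub>v n"
proof -
  have "w = 0\<^sub>v n"
    if "m \<le> n" "w \<in> carrier_vec n" "\<And>k. m \<le> k \<Longrightarrow> k < n \<Longrightarrow> w $ k = 0"
      "P *\<^sub>v w = 0\<^sub>v n" for m :: nat and w :: "'a vec"
    using that
  proof (induction m arbitrary: w)
    case 0
    then show ?case
      by (intro eq_vecI) auto
  next
    case (Suc m)
    \<comment> \<open>applying D - D(m,m) kills the top coordinate of w and scales the others by nonzero factors\<close>
    note w = \<open>w \<in> carrier_vec n\<close>
    have m: "m < n"
      using Suc.prems(1) by simp
    define w' where "w' = D *\<^sub>v w - D $$ (m, m) \<cdot>\<^sub>v w"
    have w': "w' \<in> carrier_vec n"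
      using D w by (simp add: w'_def)
    have w'_index: "w' $ k = (D $$ (k, k) - D $$ (m, m)) * w $ k" if "k < n" for k
      using diagonal_mat_mult_vec_index[OF D \<open>diagonal_mat D\<close> w that] D w that
      by (simp add: w'_def algebra_simps)
    have "P *\<^sub>v w' = 0\<^sub>v n"
      unfolding w'_def using intertwining_preserves_kernel[OF A P D AP w Suc.prems(4)] .
    moreover have "w' $ k = 0" if "m \<le> k" "k < n" for k
      using that Suc.prems(3)[of k] w'_index[OF \<open>k < n\<close>] by (cases "k = m") auto
    ultimately have "w' = 0\<^sub>v n"
      using Suc.IH[OF _ w'] m by simp
    have support: "w $ k = 0" if "k < n" "k \<noteq> m" for k
    proof (cases "k < m")
      case True
      then have "(D $$ (k, k) - D $$ (m, m)) * w $ k = 0"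
        using w'_index[of k] \<open>w' = 0\<^sub>v n\<close> that by simp
      moreover have "D $$ (k, k) \<noteq> D $$ (m, m)"
        using distinct that m unfolding inj_on_def by auto
      ultimately show ?thesis
        by simp
    next
      case False
      with that show ?thesis
        using Suc.prems(3)[of k] by simp
    qed
    show ?case
      using mult_vec_single_support_eq_zero[OF P w m support cols[OF m] Suc.prems(4)] .
  qed
  from this[OF le_refl w _ Pw] show ?thesis
    by simp
qed

lemma eigenvector_matrix_mult:
  fixes A :: "'a::comm_ring_1 mat" and v :: "nat \<Rightarrow> 'a vec"
  assumes A: "A \<in> carrier_mat n n" and v: "\<And>i. i < n \<Longrightarrow> eigenvector A (v i) (lam i)"
  shows "A * mat n n (\<lambda>(k, i). v i $ k)
    = mat n n (\<lambda>(k, i). v i $ k) * mat n n (\<lambda>(i, j). if i = j then lam i else 0)"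
    (is "A * ?P = ?P * ?D")
proof (rule eq_matI)
  fix k i assume "k < dim_row (?P * ?D)" "i < dim_col (?P * ?D)"
  then have k: "k < n" and i: "i < n"
    by auto
  have v_carrier: "v i \<in> carrier_vec n" and A_v: "A *\<^sub>v v i = lam i \<cdot>\<^sub>v v i"
    using v[OF i] A unfolding eigenvector_def by auto
  have "col ?P i = v i"
    using v_carrier i by (intro eq_vecI) auto
  then have "(A * ?P) $$ (k, i) = (A *\<^sub>v v i) $ k"
    using A k i by simp
  also have "\<dots> = ?P $$ (k, i) * ?D $$ (i, i)"
    using A_v v_carrier k i by (simp add: mult.commute)
  also have "\<dots> = (?P * ?D) $$ (k, i)"
    using diagonal_mat_mult_index_right[of ?D n ?P n, OF _ _ _ k i] by (simp add: diagonal_mat_def)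
  finally show "(A * ?P) $$ (k, i) = (?P * ?D) $$ (k, i)" .
qed (use A in auto)

lemma distinct_eigenvalues_imp_similar_diagonal:
  fixes A :: "'a::field mat"
  assumes A: "A \<in> carrier_mat n n" and eigenvalues: "\<And>i. i < n \<Longrightarrow> eigenvalue A (lam i)"
    and distinct: "inj_on lam {..<n}"
  obtains P Q D where "similar_mat_wit A D P Q" and "diagonal_mat D"
    and "inj_on (\<lambda>i. D $$ (i, i)) {..<n}"
proof -
  obtain v where v: "\<And>i. i < n \<Longrightarrow> eigenvector A (v i) (lam i)"
    using eigenvalues unfolding eigenvalue_def by metis
  define P where "P = mat n n (\<lambda>(k, i). v i $ k)"
  define D where "D = mat n n (\<lambda>(i, j). if i = j then lam i else 0)"
  have P: "P \<in> carrier_mat n n" and D: "D \<in> carrier_mat n n"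
    by (simp_all add: P_def D_def)
  have "diagonal_mat D"
    by (simp add: D_def diagonal_mat_def)
  have distinct_D: "inj_on (\<lambda>i. D $$ (i, i)) {..<n}"
    using distinct by (simp add: D_def inj_on_def)
  have AP: "A * P = P * D"
    unfolding P_def D_def using eigenvector_matrix_mult[OF A v] .
  have "col P i \<noteq> 0\<^sub>v n" if "i < n" for i
  proof -
    have "col P i = v i"
      using v[OF that] A that unfolding eigenvector_def by (intro eq_vecI) (auto simp: P_def)
    with v[OF that] A show ?thesis
      unfolding eigenvector_def by simp
  qed
  then have "det P \<noteq> 0"
    using eigenvector_columns_independent[OF A P D \<open>diagonal_mat D\<close> distinct_D AP]
      det_0_iff_vec_prod_zero_field[OF P] by auto
  then obtain Q where Q: "Q \<in> carrier_mat n n" and PQ: "P * Q = 1\<^sub>m n" and QP: "Q * P = 1\<^sub>m n"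
    using det_non_zero_imp_unit[OF P, of "()"] unfolding Units_def by (auto simp: ring_mat_simps)
  have "A = A * (P * Q)"
    using A by (simp add: PQ)
  also have "\<dots> = P * D * Q"
    using A P Q D by (simp flip: assoc_mult_mat add: AP)
  finally have "similar_mat_wit A D P Q"
    using A P Q D PQ QP by (intro similar_mat_witI) auto
  with \<open>diagonal_mat D\<close> distinct_D show ?thesis
    using that by blast
qed

lemma coprime_imp_bezout:
  fixes a b :: "'a::euclidean_ring"
  assumes "coprime a b"
  shows "\<exists>u v. u * a + v * b = 1"
  using assms
proof (induction "euclidean_size b" arbitrary: a b rule: less_induct)
  case less
  show ?case
  proof (cases "b = 0")
    case True
    with less.prems obtain k where "1 = a * k"
      by auto
    then have "k * a + 0 * b = 1"
      by (simp add: mult.commute)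
    then show ?thesis by blast
  next
    case False
    then have "euclidean_size (a mod b) < euclidean_size b"
      by (rule mod_size_less)
    moreover have "coprime b (a mod b)"
      using less.prems False by (simp add: coprime_commute)
    ultimately obtain u v where "u * b + v * (a mod b) = 1"
      using less.hyps by blast
    then have "v * a + (u - v * (a div b)) * b = 1"
      by (simp add: minus_div_mult_eq_mod [symmetric] algebra_simps)
    then show ?thesis by blast
  qed
qed

lemma rsquarefree_map_poly_if_coprime_pderiv:
  fixes f :: "'a::field_char_0 \<Rightarrow> 'b::field_char_0"
  assumes "field_hom f" and "coprime p (pderiv p)"
  shows "rsquarefree (map_poly f p)"
proof -
  interpret field_hom f by fact
  interpret map_poly_hom: map_poly_comm_ring_hom f ..
  obtain u v where "u * p + v * pderiv p = 1"
    using coprime_imp_bezout[OF assms(2)] by blast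
  then have "map_poly f (u * p + v * pderiv p) = 1"
    by simp
  then have bezout: "map_poly f u * map_poly f p + map_poly f v * pderiv (map_poly f p) = 1"
    by (simp add: map_poly_hom.hom_add map_poly_hom.hom_mult map_poly_pderiv)
  have "\<not> (poly (map_poly f p) a = 0 \<and> poly (pderiv (map_poly f p)) a = 0)" for a
  proof
    assume "poly (map_poly f p) a = 0 \<and> poly (pderiv (map_poly f p)) a = 0"
    then have "poly (map_poly f u * map_poly f p + map_poly f v * pderiv (map_poly f p)) a = 0"
      by simp
    with bezout show False by simp
  qed
  then show ?thesis
    by (simp add: rsquarefree_roots)
qed

lemma proots_prod_linear_factors: "proots (\<Prod>x\<in>#M. [:-x, 1:]) = (M :: 'a::idom multiset)"
proof (induction M)
  case (add x M)
  have "proots ([:-x, 1:] * (\<Prod>y\<in>#M. [:-y, 1:])) = proots [:-x, 1:] + proots (\<Prod>y\<in>#M. [:-y, 1:])"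
    by (rule proots_mult) auto
  with add.IH show ?case by simp
qed simp

lemma size_proots_alg_closed: "size (proots p) = Polynomial.degree (p :: 'a::alg_closed_field poly)"
proof (cases "p = 0")
  case False
  then obtain M where M: "size M = Polynomial.degree p"
    and p: "p = Polynomial.smult (Polynomial.lead_coeff p) (\<Prod>x\<in>#M. [:-x, 1:])"
    using alg_closed_imp_factorization by blast
  have "proots p = M"
    using False by (subst p) (simp add: proots_prod_linear_factors)
  with M show ?thesis by simp
qed simp

lemma rsquarefree_imp_distinct_roots:
  fixes p :: "'a::alg_closed_field poly"
  assumes "rsquarefree p"
  obtains xs where "distinct xs" "length xs = Polynomial.degree p" "\<And>x. x \<in> set xs \<Longrightarrow> poly p x = 0"
proof -
  have "p \<noteq> 0" using assms by (simp add: rsquarefree_def)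
  obtain xs where xs: "mset xs = proots p" using ex_mset by blast
  have count_le_1: "count (proots p) x \<le> 1" for x
  proof -
    have "Polynomial.order x p = 0 \<or> Polynomial.order x p = 1"
      using assms by (simp add: rsquarefree_def)
    with \<open>p \<noteq> 0\<close> show ?thesis by auto
  qed
  have "distinct xs"
    unfolding distinct_count_atmost_1
  proof
    fix x
    have le: "count (mset xs) x \<le> 1"
      using count_le_1[of x] by (simp add: xs)
    show "count (mset xs) x = (if x \<in> set xs then 1 else 0)"
    proof (cases "x \<in> set xs")
      case True
      then have "count (mset xs) x \<noteq> 0"
        by simp
      with le have "count (mset xs) x = 1"
        by linarith
      with True show ?thesis
        by simp
    qed simp
  qed
  moreover have "length xs = Polynomial.degree p"
    using arg_cong[OF xs, of size] by (simp add: size_proots_alg_closed)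
  moreover have "poly p x = 0" if "x \<in> set xs" for x
  proof -
    from that have "x \<in># proots p"
      unfolding xs [symmetric] by simp
    with \<open>p \<noteq> 0\<close> show ?thesis by simp
  qed
  ultimately show ?thesis using that by blast
qed

lemma separable_char_poly_imp_centralizer_commute:
  fixes A B C :: "'a::field_char_0 mat"
  assumes A: "A \<in> carrier_mat n n" and B: "B \<in> carrier_mat n n" and C: "C \<in> carrier_mat n n"
    and separable: "coprime (char_poly A) (pderiv (char_poly A))"
    and AB: "A * B = B * A" and AC: "A * C = C * A"
  shows "B * C = C * B"
proof -
  interpret field_hom "to_ac :: 'a \<Rightarrow> 'a alg_closure"
    by unfold_locales auto
  let ?A = "map_mat to_ac A" and ?B = "map_mat to_ac B" and ?C = "map_mat to_ac C"
  have A': "?A \<in> carrier_mat n n"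
    using A by simp
  have "rsquarefree (char_poly ?A)"
    using rsquarefree_map_poly_if_coprime_pderiv[OF field_hom_axioms separable] char_poly_hom[OF A]
    by simp
  then obtain xs where "distinct xs" and "length xs = n" and "\<And>x. x \<in> set xs \<Longrightarrow> poly (char_poly ?A) x = 0"
    using degree_monic_char_poly[OF A'] by (metis rsquarefree_imp_distinct_roots)
  then have "eigenvalue ?A (xs ! i)" if "i < n" for i
    using that eigenvalue_root_char_poly[OF A'] by simp
  moreover have "inj_on (nth xs) {..<n}"
    using \<open>distinct xs\<close> \<open>length xs = n\<close> by (simp add: inj_on_nth)
  ultimately obtain P Q D where "similar_mat_wit ?A D P Q" and "diagonal_mat D"
    and "inj_on (\<lambda>i. D $$ (i, i)) {..<n}"
    using distinct_eigenvalues_imp_similar_diagonal[OF A'] by metis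
  moreover have "?A * ?B = ?B * ?A" and "?A * ?C = ?C * ?A"
    using AB AC A B C by (simp_all flip: mat_hom_mult)
  ultimately have "?B * ?C = ?C * ?B"
    using similar_diagonal_distinct_imp_centralizer_commute[OF A'] B C by simp
  then show ?thesis
    using B C by (simp flip: mat_hom_mult add: mat_hom_inj)
qed

lemma quad_conj_comm_ring_hom:
  assumes "quad_conj c"
  shows "comm_ring_hom c"
proof -
  have add: "c (x + y) = c x + c y" and "c (x * y) = c x * c y" and "c 1 = 1" for x y
    using assms by (simp_all add: quad_conj_def)
  moreover have "c 0 = 0"
    using add[of 0 0] by simp
  ultimately show ?thesis
    by unfold_locales simp_all
qed

lemma map_mat_quad_conj_involution:
  assumes "quad_conj c"
  shows "map_mat c (map_mat c M) = M"
  using assms by (intro eq_matI) (simp_all add: quad_conj_def)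

lemma GL_fix_iff: "g \<in> GL_fix c n \<longleftrightarrow> g \<in> GL n \<and> map_mat c g = g"
proof (cases "g \<in> GL n")
  case True
  then have g: "g \<in> carrier_mat n n"
    by (simp add: GL_def)
  have "(\<forall>i<n. \<forall>j<n. c (g $$ (i, j)) = g $$ (i, j)) \<longleftrightarrow> map_mat c g = g"
  proof
    assume "\<forall>i<n. \<forall>j<n. c (g $$ (i, j)) = g $$ (i, j)"
    with g show "map_mat c g = g"
      by (intro eq_matI) auto
  next
    assume fixed: "map_mat c g = g"
    show "\<forall>i<n. \<forall>j<n. c (g $$ (i, j)) = g $$ (i, j)"
    proof (intro allI impI)
      fix i j assume "i < n" and "j < n"
      with g show "c (g $$ (i, j)) = g $$ (i, j)"
        using arg_cong[OF fixed, of "\<lambda>M. M $$ (i, j)"] by simp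
    qed
  qed
  with True show ?thesis
    by (simp add: GL_fix_def)
qed (simp add: GL_fix_def)

lemma GL_mat_inv:
  fixes g :: "'a::field mat"
  assumes "g \<in> GL n"
  shows "mat_inv g \<in> carrier_mat n n" and "g * mat_inv g = 1\<^sub>m n" and "mat_inv g * g = 1\<^sub>m n"
proof -
  have g: "g \<in> carrier_mat n n" and "invertible_mat g"
    using assms by (simp_all add: GL_def)
  then obtain h where gh: "g * h = 1\<^sub>m n" and hg: "h * g = 1\<^sub>m (dim_row h)"
    unfolding invertible_mat_def inverts_mat_def by auto
  have "dim_col h = n"
    using arg_cong[OF gh, of dim_col] by simp
  moreover have "dim_row h = n"
    using arg_cong[OF hg, of dim_col] g by simp
  ultimately have "h \<in> carrier_mat n n"
    by auto
  then have "g \<in> Units (ring_mat TYPE('a) n ())"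
    using g gh hg unfolding Units_def by (auto simp: ring_mat_simps)
  then have "mat_inverse g \<noteq> None"
    using mat_inverse(1)[OF g, of "()"] by blast
  then obtain h' where "mat_inverse g = Some h'"
    by blast
  with mat_inverse(2)[OF g this] show "mat_inv g \<in> carrier_mat n n"
    and "g * mat_inv g = 1\<^sub>m n" and "mat_inv g * g = 1\<^sub>m n"
    by (simp_all add: mat_inv_def)
qed

lemma GL_mult_left_cancel:
  fixes g :: "'a::field mat"
  assumes "g \<in> GL n" and M: "M \<in> carrier_mat n n" and M': "M' \<in> carrier_mat n n"
    and "g * M = g * M'"
  shows "M = M'"
proof -
  note g_inv = GL_mat_inv[OF assms(1)]
  have g: "g \<in> carrier_mat n n"
    using assms(1) by (simp add: GL_def)
  have "M = mat_inv g * (g * M)"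
    using g_inv g M by (simp flip: assoc_mult_mat)
  also have "\<dots> = mat_inv g * (g * M')"
    by (simp only: \<open>g * M = g * M'\<close>)
  also have "\<dots> = M'"
    using g_inv g M' by (simp flip: assoc_mult_mat)
  finally show ?thesis .
qed

lemma T_set_iff_twisted_commute:
  fixes \<gamma> :: "'a::field mat"
  assumes \<gamma>: "\<gamma> \<in> carrier_mat n n"
  shows "g \<in> T_set c n \<gamma> \<longleftrightarrow> g \<in> GL n \<and> \<gamma> * map_mat c g = g * \<gamma>"
proof (cases "g \<in> GL n")
  case True
  note g_inv = GL_mat_inv[OF True]
  have g: "g \<in> carrier_mat n n" and g': "map_mat c g \<in> carrier_mat n n"
    using True by (simp_all add: GL_def)
  have "mat_inv g * \<gamma> * map_mat c g = \<gamma> \<longleftrightarrow> g * (mat_inv g * \<gamma> * map_mat c g) = g * \<gamma>"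
    using GL_mult_left_cancel[OF True] g_inv \<gamma> g' by (metis mult_carrier_mat)
  also have "g * (mat_inv g * \<gamma> * map_mat c g) = \<gamma> * map_mat c g"
  proof -
    have "g * (mat_inv g * \<gamma> * map_mat c g) = g * mat_inv g * (\<gamma> * map_mat c g)"
      using g_inv(1) \<gamma> g g' by (simp add: assoc_mult_mat[of _ n n _ n _ n])
    also have "\<dots> = \<gamma> * map_mat c g"
      using \<gamma> g' by (simp add: g_inv)
    finally show ?thesis .
  qed
  finally show ?thesis
    using True by (simp add: T_set_def)
qed (simp add: T_set_def)

lemma fixed_norm_imp_commute_conj:
  fixes \<gamma> :: "'a::field_char_0 mat"
  assumes c: "quad_conj c" and \<gamma>: "\<gamma> \<in> carrier_mat n n"
    and fixed: "map_mat c (map_mat c \<gamma> * \<gamma>) = map_mat c \<gamma> * \<gamma>"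
  shows "\<gamma> * map_mat c \<gamma> = map_mat c \<gamma> * \<gamma>"
proof -
  interpret comm_ring_hom c
    using quad_conj_comm_ring_hom[OF c] .
  have "map_mat c (map_mat c \<gamma> * \<gamma>) = \<gamma> * map_mat c \<gamma>"
    using \<gamma> by (simp add: mat_hom_mult map_mat_quad_conj_involution[OF c])
  with fixed show ?thesis
    by simp
qed

lemma twisted_commute_imp_commute_norm:
  fixes \<gamma> g :: "'a::field_char_0 mat"
  assumes c: "quad_conj c" and \<gamma>: "\<gamma> \<in> carrier_mat n n" and g: "g \<in> carrier_mat n n"
    and normal: "\<gamma> * map_mat c \<gamma> = map_mat c \<gamma> * \<gamma>"
    and twisted: "\<gamma> * map_mat c g = g * \<gamma>"
  shows "g * (map_mat c \<gamma> * \<gamma>) = map_mat c \<gamma> * \<gamma> * g"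
proof -
  interpret comm_ring_hom c
    using quad_conj_comm_ring_hom[OF c] .
  have \<gamma>': "map_mat c \<gamma> \<in> carrier_mat n n" and g': "map_mat c g \<in> carrier_mat n n"
    using \<gamma> g by simp_all
  have conj_twisted: "map_mat c \<gamma> * g = map_mat c g * map_mat c \<gamma>"
    using arg_cong[OF twisted, of "map_mat c"] \<gamma> g
    by (simp add: mat_hom_mult map_mat_quad_conj_involution[OF c])
  have "g * (map_mat c \<gamma> * \<gamma>) = g * (\<gamma> * map_mat c \<gamma>)"
    by (simp add: normal)
  also have "\<dots> = g * \<gamma> * map_mat c \<gamma>"
    using g \<gamma> \<gamma>' by (simp add: assoc_mult_mat)
  also have "\<dots> = \<gamma> * map_mat c g * map_mat c \<gamma>"
    by (simp add: twisted)
  also have "\<dots> = \<gamma> * (map_mat c \<gamma> * g)"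
    using g' \<gamma> \<gamma>' by (simp add: assoc_mult_mat conj_twisted)
  also have "\<dots> = map_mat c \<gamma> * \<gamma> * g"
    using g \<gamma> \<gamma>' by (simp add: assoc_mult_mat flip: normal)
  finally show ?thesis .
qed

lemma T_set_iff_centralizer:
  fixes \<gamma> :: "'a::field_char_0 mat"
  assumes c: "quad_conj c" and \<gamma>_GL: "\<gamma> \<in> GL n"
    and fixed: "map_mat c (map_mat c \<gamma> * \<gamma>) = map_mat c \<gamma> * \<gamma>"
    and separable: "coprime (char_poly (map_mat c \<gamma> * \<gamma>)) (pderiv (char_poly (map_mat c \<gamma> * \<gamma>)))"
  shows "g \<in> T_set c n \<gamma> \<longleftrightarrow> g \<in> GL_fix c n \<and> g * (map_mat c \<gamma> * \<gamma>) = map_mat c \<gamma> * \<gamma> * g"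
proof -
  let ?N = "map_mat c \<gamma> * \<gamma>"
  have \<gamma>: "\<gamma> \<in> carrier_mat n n"
    using \<gamma>_GL by (simp add: GL_def)
  then have N: "?N \<in> carrier_mat n n"
    by simp
  have normal: "\<gamma> * map_mat c \<gamma> = ?N"
    using fixed_norm_imp_commute_conj[OF c \<gamma> fixed] .
  have "\<gamma> * ?N = ?N * \<gamma>"
    using \<gamma> by (simp add: assoc_mult_mat[of _ n n _ n _ n] flip: normal)
  then have commute_\<gamma>: "g * \<gamma> = \<gamma> * g" if "g \<in> carrier_mat n n" "g * ?N = ?N * g" for g
    using separable_char_poly_imp_centralizer_commute[OF N that(1) \<gamma> separable] that by simp
  show ?thesis
  proof
    assume "g \<in> T_set c n \<gamma>"
    then have g_GL: "g \<in> GL n" and twisted: "\<gamma> * map_mat c g = g * \<gamma>"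
      using T_set_iff_twisted_commute[OF \<gamma>] by simp_all
    then have g: "g \<in> carrier_mat n n"
      by (simp add: GL_def)
    have "g * ?N = ?N * g"
      using twisted_commute_imp_commute_norm[OF c \<gamma> g normal twisted] .
    with twisted commute_\<gamma>[OF g] have "\<gamma> * map_mat c g = \<gamma> * g"
      by simp
    then have "map_mat c g = g"
      using GL_mult_left_cancel[OF \<gamma>_GL] g by simp
    with g_GL \<open>g * ?N = ?N * g\<close> show "g \<in> GL_fix c n \<and> g * ?N = ?N * g"
      by (simp add: GL_fix_iff)
  next
    assume "g \<in> GL_fix c n \<and> g * ?N = ?N * g"
    then have g_GL: "g \<in> GL n" and "map_mat c g = g" and "g * ?N = ?N * g"
      by (simp_all add: GL_fix_iff)
    moreover have "g \<in> carrier_mat n n"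
      using g_GL by (simp add: GL_def)
    ultimately show "g \<in> T_set c n \<gamma>"
      using T_set_iff_twisted_commute[OF \<gamma>] commute_\<gamma> by simp
  qed
qed

theorem mainTheorem9:
  fixes c :: "'a::field_char_0 \<Rightarrow> 'a" and n :: nat and \<gamma> :: "'a mat"
  assumes "quad_conj c"
    and "\<gamma> \<in> GL n"
    and "map_mat c \<gamma> * \<gamma> \<in> GL_fix c n"
    and "regular_semisimple n (map_mat c \<gamma> * \<gamma>)"
  shows "T_set c n \<gamma> \<subseteq> GL_fix c n
    \<and> T_set c n \<gamma> = {g \<in> GL_fix c n. g * (map_mat c \<gamma> * \<gamma>) = (map_mat c \<gamma> * \<gamma>) * g}"
proof -
  have "map_mat c (map_mat c \<gamma> * \<gamma>) = map_mat c \<gamma> * \<gamma>"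
    using assms(3) by (simp add: GL_fix_iff)
  moreover have "coprime (char_poly (map_mat c \<gamma> * \<gamma>)) (pderiv (char_poly (map_mat c \<gamma> * \<gamma>)))"
    using assms(4) by (simp add: regular_semisimple_def)
  ultimately have "g \<in> T_set c n \<gamma> \<longleftrightarrow> g \<in> GL_fix c n \<and> g * (map_mat c \<gamma> * \<gamma>) = map_mat c \<gamma> * \<gamma> * g"
    for g
    using T_set_iff_centralizer[OF assms(1,2)] by blast
  then show ?thesis
    by blast
qed

end
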